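(* Assume the standing hypotheses in the context. Consider, in a front tracking solution, a family of parallel contact discontinuities $\sigma_\alpha$, $\alpha=1,\dots,N$, of a linearly degenerate family $i$, and a single front $\sigma$ of a family $k\neq i$ which interacts with all of them. Let $\xi_\alpha$, $\xi$ be their shift rates before the interactions and $\xi_\alpha'$, $\xi'$ after, and assume $\xi_\alpha=\bar\xi$ for all $\alpha$. Let $\bar\Lambda$, $\Lambda$ be the speeds of the $\sigma_\alpha$ and of $\sigma$ before interaction and $\bar\Lambda'$, $\Lambda'$ their speeds after interaction. Then after the interactions all $\xi_\alpha'$ have the same value $\bar\xi'$ and $$\xi_\alpha'=\bar\xi'=\frac{\bar\xi(\bar\Lambda'-\Lambda)-\xi(\bar\Lambda'-\bar\Lambda)}{\Lambda-\bar\Lambda},\qquad \xi'=\frac{\bar\xi(\Lambda'-\Lambda)-\xi(\bar\Lambda'-\bar\Lambda)}{\Lambda-\bar\Lambda}.$$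
   Context: Setting: $u_t+f(u)_x=0$ with $f:\Omega\to\mathbb{R}^n$ smooth, $\Omega\subseteq\mathbb{R}^n$ open, eigenvalues $\lambda_1<\dots<\lambda_n$ of $Df$ with right eigenvectors $r_i$. Standing assumptions: (H1) each field genuinely nonlinear ($r_i\bullet\lambda_i\neq0$) or linearly degenerate ($r_i\bullet\lambda_i\equiv0$); (H2) rarefaction curves form Riemann coordinates $w=(w_1,\dots,w_n)$; (H3) shock and rarefaction curves coincide; $E=\{u\in\Omega:w_i(u)\in[a_i,b_i]\}$ compact and uniformly strictly hyperbolic. Front tracking solution with parameter $\nu$: piecewise constant solution with values in $E^\nu=\{u\in E:w_i(u)\in2^{-\nu}\mathbb{Z}\}$ obtained by solving Riemann problems $[u^-,u^+]$ (split along $\omega_i=(w_1(u^+),\dots,w_i(u^+),w_{i+1}(u^-),\dots,w_n(u^-))$) with contact discontinuities of speed $\lambda_i$ for linearly degenerate fields, shocks with Rankine–Hugoniot speed, and rarefaction fronts with $w_i$-jump $2^{-\nu}$, and tracking interactions. Shift rates: if the initial jumps at $y_\alpha$ are moved to $y_\alpha+\theta\xi_\alpha$, each front at $x_\beta(t)$ of the original solution moves to $x_\beta(t)+\theta\xi_\beta(t)+o(\theta)$ in the perturbed front tracking solution; $\xi_\beta$ is the shift rate of that front. *)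

theory Defs
  imports "HOL-Analysis.Analysis"
begin

text \<open>Shift rate: in the perturbed front tracking solution (perturbation parameter
  theta) a front sits at position x theta = x 0 + theta * xi + o(theta), i.e. xi is the
  derivative at theta = 0 of its position.\<close>
definition shift_rate :: "(real \<Rightarrow> real) \<Rightarrow> real \<Rightarrow> bool" where
  "shift_rate x xi \<longleftrightarrow> (x has_real_derivative xi) (at 0)"

end

theory Submission
  imports Defs
begin

text \<open>Each interaction time \<open>tau a\<close> is the time at which the current line of the front
  crosses the line of the \<open>a\<close>-th contact. Differentiating the crossing condition, the first
  interaction point moves with velocity \<open>(t', X')\<close>, where \<open>t' = (xib - xi) / (lam 0 - Lb)\<close> and
  \<open>X' = xib + Lb * t' = xi + lam 0 * t'\<close>. Since the contacts are parallel and share the shift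
  rate \<open>xib\<close>, the new line of the front through the shifted interaction point meets the next
  shifted contact line again at the point shifted by \<open>(t', X')\<close>; by induction every interaction
  point has the shift rate \<open>(t', X')\<close>. After its interaction each front moves on a line of speed
  \<open>c\<close> through its interaction point, hence has shift rate \<open>X' - c * t'\<close>.\<close>

lemma has_real_derivative_eventually_affine:
  fixes y p s :: "real \<Rightarrow> real"
  assumes "\<forall>\<^sub>F \<theta> in nhds x. y \<theta> = p \<theta> + c * s \<theta>"
    and "(p has_real_derivative p') (at x)" and "(s has_real_derivative s') (at x)"
  shows "(y has_real_derivative p' + c * s') (at x)"
proof -
  have "((\<lambda>\<theta>. p \<theta> + c * s \<theta>) has_real_derivative p' + c * s') (at x)"
    using assms(2,3) by (auto intro!: derivative_eq_intros)
  then show ?thesis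
    using DERIV_cong_ev[OF refl assms(1) refl] by simp
qed

lemma crossing_time_has_real_derivative:
  fixes s p q :: "real \<Rightarrow> real"
  assumes cross: "\<forall>\<^sub>F \<theta> in nhds x. p \<theta> + c * s \<theta> = q \<theta> + d * s \<theta>"
    and "c \<noteq> d"
    and "(p has_real_derivative p') (at x)" and "(q has_real_derivative q') (at x)"
  shows "(s has_real_derivative (p' - q') / (d - c)) (at x)"
proof -
  have solved: "\<forall>\<^sub>F \<theta> in nhds x. s \<theta> = (p \<theta> - q \<theta>) / (d - c)"
    using cross by eventually_elim (use \<open>c \<noteq> d\<close> in \<open>auto simp: field_simps\<close>)
  have "((\<lambda>\<theta>. (p \<theta> - q \<theta>) / (d - c)) has_real_derivative (p' - q') / (d - c)) (at x)"
    using assms(2-4) by (auto intro!: derivative_eq_intros)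
  then show ?thesis
    using DERIV_cong_ev[OF refl solved refl] by simp
qed

locale parallel_contacts_crossing =
  fixes N :: nat
    and xc :: "nat \<Rightarrow> real \<Rightarrow> real \<Rightarrow> real"
    and xs :: "real \<Rightarrow> real \<Rightarrow> real"
    and tau :: "nat \<Rightarrow> real \<Rightarrow> real"
    and lam :: "nat \<Rightarrow> real"
    and Lb xib xi \<delta> :: real
  assumes N: "N \<ge> 1"
    and delta: "\<delta> > 0"
    and noncoinc: "\<And>a. a < N \<Longrightarrow> lam a \<noteq> Lb"
    and order0: "\<And>\<theta>. \<bar>\<theta>\<bar> < \<delta> \<Longrightarrow> 0 < tau 0 \<theta>"
    and order: "\<And>\<theta> a. \<bar>\<theta>\<bar> < \<delta> \<Longrightarrow> Suc a < N \<Longrightarrow> tau a \<theta> < tau (Suc a) \<theta>"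
    and contact_before: "\<And>\<theta> a t. \<bar>\<theta>\<bar> < \<delta> \<Longrightarrow> a < N \<Longrightarrow> 0 \<le> t \<Longrightarrow> t \<le> tau a \<theta> \<Longrightarrow>
        xc a \<theta> t = xc a \<theta> 0 + Lb * t"
    and front_first: "\<And>\<theta> t. \<bar>\<theta>\<bar> < \<delta> \<Longrightarrow> 0 \<le> t \<Longrightarrow> t \<le> tau 0 \<theta> \<Longrightarrow>
        xs \<theta> t = xs \<theta> 0 + lam 0 * t"
    and front_mid: "\<And>\<theta> a t. \<bar>\<theta>\<bar> < \<delta> \<Longrightarrow> Suc a < N \<Longrightarrow> tau a \<theta> \<le> t \<Longrightarrow> t \<le> tau (Suc a) \<theta> \<Longrightarrow>
        xs \<theta> t = xs \<theta> (tau a \<theta>) + lam (Suc a) * (t - tau a \<theta>)"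
    and meet: "\<And>\<theta> a. \<bar>\<theta>\<bar> < \<delta> \<Longrightarrow> a < N \<Longrightarrow> xs \<theta> (tau a \<theta>) = xc a \<theta> (tau a \<theta>)"
    and rate_contacts: "\<And>a. a < N \<Longrightarrow> shift_rate (\<lambda>\<theta>. xc a \<theta> 0) xib"
    and rate_front: "shift_rate (\<lambda>\<theta>. xs \<theta> 0) xi"
begin

definition interaction_time_rate :: real where
  "interaction_time_rate = (xib - xi) / (lam 0 - Lb)"

lemma lam0_neq_Lb: "lam 0 \<noteq> Lb"
  using noncoinc N by simp

lemma eventually_small_parameter: "\<forall>\<^sub>F \<theta> in nhds 0. \<bar>\<theta>\<bar> < \<delta>"
  using delta by (auto simp: eventually_nhds_metric dist_real_def)

lemma tau_mono:
  assumes "a \<le> b" "b < N" "\<bar>\<theta>\<bar> < \<delta>"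
  shows "tau a \<theta> \<le> tau b \<theta>"
  using assms
proof (induction b rule: dec_induct)
  case (step b)
  then show ?case using order[of \<theta> b] by force
qed simp

lemma tau_pos: "a < N \<Longrightarrow> \<bar>\<theta>\<bar> < \<delta> \<Longrightarrow> 0 < tau a \<theta>"
  using tau_mono[of 0 a \<theta>] order0[of \<theta>] by simp

lemma interaction_point_on_contact:
  assumes "a < N" "\<bar>\<theta>\<bar> < \<delta>"
  shows "xs \<theta> (tau a \<theta>) = xc a \<theta> 0 + Lb * tau a \<theta>"
  using meet[OF assms(2,1)] contact_before[OF assms(2,1) less_imp_le[OF tau_pos[OF assms]] order_refl]
  by (rule trans)

lemma first_interaction:
  assumes "\<bar>\<theta>\<bar> < \<delta>"
  shows "xc 0 \<theta> 0 + Lb * tau 0 \<theta> = xs \<theta> 0 + lam 0 * tau 0 \<theta>"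
proof -
  have "0 < N" using N by simp
  from interaction_point_on_contact[OF this assms]
    front_first[OF assms less_imp_le[OF order0[OF assms]] order_refl]
  show ?thesis by linarith
qed

lemma next_interaction:
  assumes "Suc a < N" "\<bar>\<theta>\<bar> < \<delta>"
  shows "xc (Suc a) \<theta> 0 + Lb * tau (Suc a) \<theta>
    = (xs \<theta> (tau a \<theta>) - lam (Suc a) * tau a \<theta>) + lam (Suc a) * tau (Suc a) \<theta>"
  using interaction_point_on_contact[OF assms]
    front_mid[OF assms(2,1) less_imp_le[OF order[OF assms(2,1)]] order_refl]
  by (simp add: algebra_simps)

lemma interaction_point_rate:
  assumes "a < N" and "DERIV (tau a) 0 :> interaction_time_rate"
  shows "DERIV (\<lambda>\<theta>. xs \<theta> (tau a \<theta>)) 0 :> xib + Lb * interaction_time_rate"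
proof -
  have "\<forall>\<^sub>F \<theta> in nhds 0. xs \<theta> (tau a \<theta>) = xc a \<theta> 0 + Lb * tau a \<theta>"
    using eventually_small_parameter by eventually_elim (rule interaction_point_on_contact[OF assms(1)])
  from has_real_derivative_eventually_affine[OF this
      rate_contacts[OF assms(1), unfolded shift_rate_def] assms(2)]
  show ?thesis .
qed

lemma interaction_rates:
  assumes "a < N"
  shows "DERIV (tau a) 0 :> interaction_time_rate
    \<and> DERIV (\<lambda>\<theta>. xs \<theta> (tau a \<theta>)) 0 :> xib + Lb * interaction_time_rate"
  using assms
proof (induction a)
  case 0
  have "\<forall>\<^sub>F \<theta> in nhds 0. xc 0 \<theta> 0 + Lb * tau 0 \<theta> = xs \<theta> 0 + lam 0 * tau 0 \<theta>"
    using eventually_small_parameter by eventually_elim (rule first_interaction)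
  from crossing_time_has_real_derivative[OF this lam0_neq_Lb[symmetric]
      rate_contacts[OF "0.prems", unfolded shift_rate_def] rate_front[unfolded shift_rate_def]]
  have "DERIV (tau 0) 0 :> interaction_time_rate"
    unfolding interaction_time_rate_def .
  then show ?case using interaction_point_rate[OF "0.prems"] by blast
next
  case (Suc a)
  let ?t' = interaction_time_rate and ?l = "lam (Suc a)"
  have crossing: "\<forall>\<^sub>F \<theta> in nhds 0. xc (Suc a) \<theta> 0 + Lb * tau (Suc a) \<theta>
      = (xs \<theta> (tau a \<theta>) - ?l * tau a \<theta>) + ?l * tau (Suc a) \<theta>"
    using eventually_small_parameter by eventually_elim (rule next_interaction[OF Suc.prems])
  have "DERIV (\<lambda>\<theta>. xs \<theta> (tau a \<theta>) - ?l * tau a \<theta>) 0 :> (xib + Lb * ?t') - ?l * ?t'"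
    using Suc.IH Suc.prems by (intro DERIV_diff DERIV_cmult) simp_all
  from crossing_time_has_real_derivative[OF crossing noncoinc[OF Suc.prems, symmetric]
      rate_contacts[OF Suc.prems, unfolded shift_rate_def] this]
  have "DERIV (tau (Suc a)) 0 :> (xib - ((xib + Lb * ?t') - ?l * ?t')) / (?l - Lb)" .
  moreover have "xib - ((xib + Lb * ?t') - ?l * ?t') = (?l - Lb) * ?t'"
    by (simp add: algebra_simps)
  ultimately have "DERIV (tau (Suc a)) 0 :> ?t'"
    using noncoinc[OF Suc.prems] by simp
  then show ?case using interaction_point_rate[OF Suc.prems] by blast
qed

lemma eventually_interactions_before:
  assumes "tau (N - 1) 0 < T"
  shows "\<forall>\<^sub>F \<theta> in nhds 0. \<bar>\<theta>\<bar> < \<delta> \<and> (\<forall>a<N. tau a \<theta> \<le> T)"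
proof -
  have "N - 1 < N" using N by simp
  then have "isCont (tau (N - 1)) 0"
    using interaction_rates DERIV_isCont by blast
  then have "\<forall>\<^sub>F \<theta> in nhds 0. tau (N - 1) \<theta> < T"
    using assms by (simp add: isCont_def order_tendstoD(2) tendsto_at_iff_tendsto_nhds)
  with eventually_small_parameter show ?thesis
  proof eventually_elim
    case (elim \<theta>)
    have "tau a \<theta> \<le> T" if "a < N" for a
    proof -
      have "a \<le> N - 1" using that by arith
      with tau_mono[OF this \<open>N - 1 < N\<close> elim(1)] show ?thesis using elim(2) by simp
    qed
    with elim(1) show ?case by blast
  qed
qed

lemma rate_after_interactions:
  assumes "\<forall>\<^sub>F \<theta> in nhds 0. y \<theta> = xs \<theta> (tau a \<theta>) + c * (T - tau a \<theta>)" and "a < N"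
  shows "shift_rate y ((xib * (c - lam 0) - xi * (c - Lb)) / (Lb - lam 0))"
proof -
  let ?t' = interaction_time_rate
  have "DERIV (\<lambda>\<theta>. xs \<theta> (tau a \<theta>) + c * (T - tau a \<theta>)) 0 :> (xib + Lb * ?t') + c * (0 - ?t')"
    using interaction_rates[OF assms(2)] by (auto intro!: derivative_eq_intros)
  then have "DERIV y 0 :> (xib + Lb * ?t') + c * (0 - ?t')"
    using DERIV_cong_ev[OF refl assms(1) refl] by simp
  moreover have "(xib + Lb * ?t') + c * (0 - ?t') = (xib * (c - lam 0) - xi * (c - Lb)) / (Lb - lam 0)"
    using lam0_neq_Lb unfolding interaction_time_rate_def
    by (simp add: divide_simps) (simp add: algebra_simps)
  ultimately show ?thesis by (simp add: shift_rate_def)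
qed

end

theorem lemma3p3:
  fixes N :: nat
    and xc :: "nat \<Rightarrow> real \<Rightarrow> real \<Rightarrow> real"
    and xs :: "real \<Rightarrow> real \<Rightarrow> real"
    and tau :: "nat \<Rightarrow> real \<Rightarrow> real"
    and lam :: "nat \<Rightarrow> real"
    and Lb Lb' xib xi \<delta> T :: real
  assumes N: "N \<ge> 1"
    and delta: "\<delta> > 0"
    and noncoinc: "\<And>a. a < N \<Longrightarrow> lam a \<noteq> Lb"
    and order0: "\<And>\<theta>. \<bar>\<theta>\<bar> < \<delta> \<Longrightarrow> 0 < tau 0 \<theta>"
    and order: "\<And>\<theta> a. \<bar>\<theta>\<bar> < \<delta> \<Longrightarrow> Suc a < N \<Longrightarrow> tau a \<theta> < tau (Suc a) \<theta>"
    and contact_before: "\<And>\<theta> a t. \<bar>\<theta>\<bar> < \<delta> \<Longrightarrow> a < N \<Longrightarrow> 0 \<le> t \<Longrightarrow> t \<le> tau a \<theta> \<Longrightarrow>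
        xc a \<theta> t = xc a \<theta> 0 + Lb * t"
    and contact_after: "\<And>\<theta> a t. \<bar>\<theta>\<bar> < \<delta> \<Longrightarrow> a < N \<Longrightarrow> tau a \<theta> \<le> t \<Longrightarrow>
        xc a \<theta> t = xc a \<theta> (tau a \<theta>) + Lb' * (t - tau a \<theta>)"
    and front_first: "\<And>\<theta> t. \<bar>\<theta>\<bar> < \<delta> \<Longrightarrow> 0 \<le> t \<Longrightarrow> t \<le> tau 0 \<theta> \<Longrightarrow>
        xs \<theta> t = xs \<theta> 0 + lam 0 * t"
    and front_mid: "\<And>\<theta> a t. \<bar>\<theta>\<bar> < \<delta> \<Longrightarrow> Suc a < N \<Longrightarrow> tau a \<theta> \<le> t \<Longrightarrow> t \<le> tau (Suc a) \<theta> \<Longrightarrow>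
        xs \<theta> t = xs \<theta> (tau a \<theta>) + lam (Suc a) * (t - tau a \<theta>)"
    and front_last: "\<And>\<theta> t. \<bar>\<theta>\<bar> < \<delta> \<Longrightarrow> tau (N - 1) \<theta> \<le> t \<Longrightarrow>
        xs \<theta> t = xs \<theta> (tau (N - 1) \<theta>) + lam N * (t - tau (N - 1) \<theta>)"
    and meet: "\<And>\<theta> a. \<bar>\<theta>\<bar> < \<delta> \<Longrightarrow> a < N \<Longrightarrow> xs \<theta> (tau a \<theta>) = xc a \<theta> (tau a \<theta>)"
    and rate_contacts: "\<And>a. a < N \<Longrightarrow> shift_rate (\<lambda>\<theta>. xc a \<theta> 0) xib"
    and rate_front: "shift_rate (\<lambda>\<theta>. xs \<theta> 0) xi"
    and T: "T > tau (N - 1) 0"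
  shows "(\<forall>a<N. shift_rate (\<lambda>\<theta>. xc a \<theta> T)
            ((xib * (Lb' - lam 0) - xi * (Lb' - Lb)) / (Lb - lam 0)))
       \<and> shift_rate (\<lambda>\<theta>. xs \<theta> T)
            ((xib * (lam N - lam 0) - xi * (lam N - Lb)) / (Lb - lam 0))"
proof -
  interpret parallel_contacts_crossing N xc xs tau lam Lb xib xi \<delta>
    by unfold_locales (fact assms)+
  have last: "N - 1 < N" using N by simp
  note before_T = eventually_interactions_before[OF T]
  have contacts_after:
    "\<forall>\<^sub>F \<theta> in nhds 0. xc a \<theta> T = xs \<theta> (tau a \<theta>) + Lb' * (T - tau a \<theta>)" if "a < N" for a
    using before_T by eventually_elim (use contact_after[of _ a T] meet[of _ a] that in simp)
  have "shift_rate (\<lambda>\<theta>. xc a \<theta> T) ((xib * (Lb' - lam 0) - xi * (Lb' - Lb)) / (Lb - lam 0))"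
    if "a < N" for a
    by (rule rate_after_interactions[OF contacts_after[OF that] that])
  moreover have "\<forall>\<^sub>F \<theta> in nhds 0. xs \<theta> T = xs \<theta> (tau (N - 1) \<theta>) + lam N * (T - tau (N - 1) \<theta>)"
    using before_T by eventually_elim (use front_last[of _ T] last in simp)
  then have "shift_rate (\<lambda>\<theta>. xs \<theta> T) ((xib * (lam N - lam 0) - xi * (lam N - Lb)) / (Lb - lam 0))"
    by (rule rate_after_interactions[OF _ last])
  ultimately show ?thesis by blast
qed

end
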